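(* Let $n\ge 96$ and let $\mathcal{H}$ be an $n$-vertex Berge-$K_4$-saturated $3$-graph with the minimum number of hyperedges. Let $X=\{v\in V(\mathcal{H}): d_{\mathcal{H}}(v)\ge 3\}$, $A=\{v\in V(\mathcal{H})\setminus X: \text{every hyperedge containing } v \text{ intersects } X\}$ and $B=V(\mathcal{H})\setminus(X\cup A)$. Then $B=\emptyset$.
   Context: A $3$-graph has all hyperedges of size $3$. A $3$-graph contains a Berge-$K_4$ if there are $4$ distinct vertices and $6$ distinct hyperedges, one containing each of the $6$ pairs of these vertices. $\mathcal{H}$ is Berge-$K_4$-saturated if it contains no Berge-$K_4$ but adding any $3$-set of vertices not already a hyperedge creates a Berge-$K_4$. "Minimum number of hyperedges" means minimum among all Berge-$K_4$-saturated $3$-graphs on $n$ vertices. $d_{\mathcal{H}}(v)$ is the number of hyperedges containing $v$. *)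

theory Defs
  imports Main
begin

definition three_graph :: "'a set \<Rightarrow> 'a set set \<Rightarrow> bool" where
  "three_graph V E \<longleftrightarrow> (\<forall>e\<in>E. e \<subseteq> V \<and> card e = 3)"

definition pairs_of :: "'a set \<Rightarrow> 'a set set" where
  "pairs_of K = {{x, y} | x y. x \<in> K \<and> y \<in> K \<and> x \<noteq> y}"

definition has_berge_K4 :: "'a set set \<Rightarrow> bool" where
  "has_berge_K4 E \<longleftrightarrow> (\<exists>K f. finite K \<and> card K = 4 \<and>
      inj_on f (pairs_of K) \<and> f ` pairs_of K \<subseteq> E \<and>
      (\<forall>p\<in>pairs_of K. p \<subseteq> f p))"

definition berge_K4_saturated :: "'a set \<Rightarrow> 'a set set \<Rightarrow> bool" where
  "berge_K4_saturated V E \<longleftrightarrow> three_graph V E \<and> \<not> has_berge_K4 E \<and>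
     (\<forall>T. T \<subseteq> V \<longrightarrow> card T = 3 \<longrightarrow> T \<notin> E \<longrightarrow> has_berge_K4 (insert T E))"

text \<open>Minimum number of hyperedges among saturated 3-graphs on the same n-vertex set
  (equivalently, among all n-vertex ones, by isomorphism invariance).\<close>
definition min_berge_K4_saturated :: "'a set \<Rightarrow> 'a set set \<Rightarrow> bool" where
  "min_berge_K4_saturated V E \<longleftrightarrow> berge_K4_saturated V E \<and>
     (\<forall>E'. berge_K4_saturated V E' \<longrightarrow> card E \<le> card E')"

definition hdeg :: "'a set set \<Rightarrow> 'a \<Rightarrow> nat" where
  "hdeg E v = card {e \<in> E. v \<in> e}"

end

theory Submission
  imports Defs
begin

text \<open>
  Suppose some hyperedge \<open>e = {a, b, c}\<close> has only vertices of degree at most 2. Since \<open>a\<close>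
  lies in at most one further hyperedge, there is a vertex \<open>v \<notin> e\<close> for which
  \<open>T = {a, b, v}\<close> is a non-edge. By saturation, adding \<open>T\<close> creates a Berge-\<open>K\<^sub>4\<close> using \<open>T\<close>.
  Each core vertex of a Berge-\<open>K\<^sub>4\<close> has degree at least 3, so \<open>c\<close> is not a core vertex,
  while \<open>a\<close> and \<open>b\<close> have degree at most 3 after adding \<open>T\<close>. A core vertex of degree
  exactly 3 has each of its hyperedges assigned to a pair through it; applied to \<open>a\<close>
  and \<open>b\<close> this forces \<open>T\<close> to be assigned to both \<open>{a, v}\<close> and \<open>{b, v}\<close>, which contradicts
  injectivity. So every hyperedge meets \<open>X\<close>, which is exactly \<open>B = {}\<close>.
\<close>

definition is_berge_K4 :: "'a set set \<Rightarrow> 'a set \<Rightarrow> ('a set \<Rightarrow> 'a set) \<Rightarrow> bool" where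
  "is_berge_K4 F K f \<longleftrightarrow> finite K \<and> card K = 4 \<and> inj_on f (pairs_of K) \<and>
     f ` pairs_of K \<subseteq> F \<and> (\<forall>p\<in>pairs_of K. p \<subseteq> f p)"

lemma has_berge_K4_iff: "has_berge_K4 F \<longleftrightarrow> (\<exists>K f. is_berge_K4 F K f)"
  unfolding has_berge_K4_def is_berge_K4_def by blast

lemma is_berge_K4_image_subset: "is_berge_K4 F K f \<Longrightarrow> f ` pairs_of K \<subseteq> F"
  unfolding is_berge_K4_def by blast

lemma is_berge_K4_restrict: "is_berge_K4 F K f \<Longrightarrow> f ` pairs_of K \<subseteq> G \<Longrightarrow> is_berge_K4 G K f"
  unfolding is_berge_K4_def by blast

lemma doubleton_in_pairs_of: "x \<in> K \<Longrightarrow> y \<in> K \<Longrightarrow> x \<noteq> y \<Longrightarrow> {x, y} \<in> pairs_of K"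
  unfolding pairs_of_def by blast

lemma three_graph_finite: "three_graph V E \<Longrightarrow> finite V \<Longrightarrow> finite E"
  unfolding three_graph_def by (meson PowI finite_Pow_iff rev_finite_subset subsetI)

lemma hdeg_insert_le:
  assumes "finite F"
  shows "hdeg (insert T F) u \<le> Suc (hdeg F u)"
proof -
  have "hdeg (insert T F) u \<le> card (insert T {g \<in> F. u \<in> g})"
    unfolding hdeg_def using \<open>finite F\<close> by (intro card_mono) auto
  also have "\<dots> \<le> Suc (hdeg F u)"
    using \<open>finite F\<close> by (simp add: hdeg_def card_insert_le_m1)
  finally show ?thesis .
qed

lemma hdeg_insert_not_mem: "u \<notin> T \<Longrightarrow> hdeg (insert T F) u = hdeg F u"
  unfolding hdeg_def by (metis insert_iff)

lemma is_berge_K4_edges_at_core_vertex: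
  assumes "is_berge_K4 F K f" and "k \<in> K"
  shows "inj_on (\<lambda>y. f {k, y}) (K - {k})"
    and "(\<lambda>y. f {k, y}) ` (K - {k}) \<subseteq> {g \<in> F. k \<in> g}"
proof -
  have pair: "{k, y} \<in> pairs_of K" if "y \<in> K - {k}" for y
    using that \<open>k \<in> K\<close> by (auto intro: doubleton_in_pairs_of)
  have inj: "inj_on f (pairs_of K)" and cov: "\<forall>p\<in>pairs_of K. p \<subseteq> f p"
    and sub: "f ` pairs_of K \<subseteq> F"
    using assms(1) unfolding is_berge_K4_def by auto
  show "inj_on (\<lambda>y. f {k, y}) (K - {k})"
  proof (rule inj_onI)
    fix x y assume x: "x \<in> K - {k}" and y: "y \<in> K - {k}" and "f {k, x} = f {k, y}"
    then have "{k, x} = {k, y}" using inj pair by (auto dest: inj_onD)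
    then show "x = y" using x y by (auto simp: doubleton_eq_iff)
  qed
  show "(\<lambda>y. f {k, y}) ` (K - {k}) \<subseteq> {g \<in> F. k \<in> g}"
  proof (rule image_subsetI)
    fix y assume "y \<in> K - {k}"
    then show "f {k, y} \<in> {g \<in> F. k \<in> g}"
      using pair sub cov by auto
  qed
qed

lemma is_berge_K4_card_edges_at_core_vertex:
  assumes "is_berge_K4 F K f" and "k \<in> K"
  shows "card ((\<lambda>y. f {k, y}) ` (K - {k})) = 3"
proof -
  have "card (K - {k}) = 3"
    using assms unfolding is_berge_K4_def by simp
  then show ?thesis
    using is_berge_K4_edges_at_core_vertex(1)[OF assms] by (simp add: card_image)
qed

lemma is_berge_K4_core_hdeg:
  assumes "finite F" and "is_berge_K4 F K f" and "k \<in> K"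
  shows "3 \<le> hdeg F k"
proof -
  have "card ((\<lambda>y. f {k, y}) ` (K - {k})) \<le> hdeg F k"
    unfolding hdeg_def using is_berge_K4_edges_at_core_vertex(2)[OF assms(2,3)] \<open>finite F\<close>
    by (intro card_mono) auto
  then show ?thesis
    using is_berge_K4_card_edges_at_core_vertex[OF assms(2,3)] by linarith
qed

lemma is_berge_K4_edge_at_tight_core_vertex:
  assumes "finite F" and berge: "is_berge_K4 F K f" and "k \<in> K" and "hdeg F k \<le> 3"
    and "g \<in> F" and "k \<in> g"
  obtains y where "y \<in> K - {k}" and "y \<in> g" and "f {k, y} = g"
proof -
  let ?S = "{g \<in> F. k \<in> g}"
  let ?I = "(\<lambda>y. f {k, y}) ` (K - {k})"
  have fin: "finite ?S" using \<open>finite F\<close> by simp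
  have sub: "?I \<subseteq> ?S"
    using is_berge_K4_edges_at_core_vertex(2)[OF berge \<open>k \<in> K\<close>] .
  have "card ?S \<le> card ?I"
    using \<open>hdeg F k \<le> 3\<close> is_berge_K4_card_edges_at_core_vertex[OF berge \<open>k \<in> K\<close>]
    unfolding hdeg_def by linarith
  then have "?I = ?S"
    using card_mono[OF fin sub] by (intro card_subset_eq[OF fin sub]) linarith
  with assms(5,6) have "g \<in> ?I" by blast
  then obtain y where y: "y \<in> K - {k}" and fy: "f {k, y} = g"
    by blast
  moreover have "{k, y} \<in> pairs_of K"
    using y \<open>k \<in> K\<close> by (auto intro: doubleton_in_pairs_of)
  then have "y \<in> g"
    using berge fy unfolding is_berge_K4_def by auto
  ultimately show ?thesis using that by blast
qed

lemma is_berge_K4_tight_core_vertex_assigns: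
  assumes "finite F" and berge: "is_berge_K4 F K f" and "a \<in> K" and "hdeg F a \<le> 3"
    and "{a, b, c} \<in> F" and "{a, b, v} \<in> F" and new: "{a, b, v} \<noteq> {a, b, c}" and "c \<notin> K"
  shows "b \<in> K" and "v \<in> K" and "v \<noteq> a" and "f {a, v} = {a, b, v}"
proof -
  obtain y where y: "y \<in> K - {a}" "y \<in> {a, b, c}" and fy: "f {a, y} = {a, b, c}"
    using is_berge_K4_edge_at_tight_core_vertex[OF assms(1-4,5)] by blast
  then have "y = b" using \<open>c \<notin> K\<close> by auto
  with y fy have "b \<in> K" and fb: "f {a, b} = {a, b, c}" by auto
  obtain x where x: "x \<in> K - {a}" "x \<in> {a, b, v}" and fx: "f {a, x} = {a, b, v}"
    using is_berge_K4_edge_at_tight_core_vertex[OF assms(1-4,6)] by blast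
  have "x \<noteq> b" using fx fb new by auto
  with x have "x = v" by auto
  with x fx \<open>b \<in> K\<close> show "b \<in> K" "v \<in> K" "v \<noteq> a" "f {a, v} = {a, b, v}" by auto
qed

lemma new_edge_not_in_berge_K4:
  assumes "finite F" and berge: "is_berge_K4 F K f"
    and "{a, b, c} \<in> F" and "{a, b, v} \<in> F" and new: "{a, b, v} \<noteq> {a, b, c}" and "a \<noteq> b"
    and "hdeg F a \<le> 3" and "hdeg F b \<le> 3" and "hdeg F c \<le> 2"
  shows "{a, b, v} \<notin> f ` pairs_of K"
proof
  assume "{a, b, v} \<in> f ` pairs_of K"
  then obtain p where "p \<in> pairs_of K" and "f p = {a, b, v}"
    by blast
  then have "p \<subseteq> {a, b, v}"
    using berge unfolding is_berge_K4_def by blast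
  moreover obtain x y where "p = {x, y}" "x \<in> K" "y \<in> K" "x \<noteq> y"
    using \<open>p \<in> pairs_of K\<close> unfolding pairs_of_def by blast
  ultimately have "a \<in> K \<or> b \<in> K" by auto
  have "c \<notin> K"
  proof
    assume "c \<in> K"
    then have "3 \<le> hdeg F c" by (rule is_berge_K4_core_hdeg[OF \<open>finite F\<close> berge])
    with \<open>hdeg F c \<le> 2\<close> show False by simp
  qed
  note at_a = is_berge_K4_tight_core_vertex_assigns[OF \<open>finite F\<close> berge _ \<open>hdeg F a \<le> 3\<close>
      \<open>{a, b, c} \<in> F\<close> \<open>{a, b, v} \<in> F\<close> new \<open>c \<notin> K\<close>]
  have swap: "{b, a, c} = {a, b, c}" "{b, a, v} = {a, b, v}" by auto
  note at_b = is_berge_K4_tight_core_vertex_assigns[of F K f b a c v, unfolded swap,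
      OF \<open>finite F\<close> berge _ \<open>hdeg F b \<le> 3\<close> \<open>{a, b, c} \<in> F\<close> \<open>{a, b, v} \<in> F\<close> new \<open>c \<notin> K\<close>]
  have "a \<in> K" and "b \<in> K"
    using \<open>a \<in> K \<or> b \<in> K\<close> at_a(1) at_b(1) by blast+
  then have "{a, v} \<in> pairs_of K" and "{b, v} \<in> pairs_of K" and "f {a, v} = f {b, v}"
    using at_a at_b by (auto intro: doubleton_in_pairs_of)
  then have "{a, v} = {b, v}"
    using berge unfolding is_berge_K4_def by (auto dest: inj_onD)
  then show False using \<open>a \<noteq> b\<close> by (auto simp: doubleton_eq_iff)
qed

lemma exists_non_edge_through_pair:
  assumes "finite E" and "e \<in> E" and "a \<in> e" and "b \<in> e"
    and "hdeg E a \<le> 2" and "2 \<le> card (V - e)"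
  shows "\<exists>v\<in>V - e. {a, b, v} \<notin> E"
proof (rule ccontr)
  assume "\<not> ?thesis"
  then have all_edges: "{a, b, v} \<in> E" if "v \<in> V - e" for v
    using that by blast
  have "inj_on (\<lambda>v. {a, b, v}) (V - e)"
    using assms(3,4) by (intro inj_onI) (auto simp: insert_commute)
  moreover have "(\<lambda>v. {a, b, v}) ` (V - e) \<subseteq> {g \<in> E. a \<in> g} - {e}"
    using all_edges by auto
  ultimately have "card (V - e) \<le> card ({g \<in> E. a \<in> g} - {e})"
    using \<open>finite E\<close> by (intro card_inj_on_le) auto
  also have "\<dots> = hdeg E a - 1"
    using assms(2,3) by (simp add: hdeg_def card_Diff_singleton)
  finally show False using assms(5,6) by linarith
qed

lemma berge_K4_saturated_edge_has_high_degree_vertex: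
  assumes sat: "berge_K4_saturated V E" and "finite V" and "5 \<le> card V" and "e \<in> E"
  shows "\<exists>u\<in>e. 3 \<le> hdeg E u"
proof (rule ccontr)
  assume "\<not> ?thesis"
  then have low: "hdeg E u \<le> 2" if "u \<in> e" for u
    using that by force
  have "three_graph V E" and "\<not> has_berge_K4 E"
    using sat unfolding berge_K4_saturated_def by auto
  then have "finite E" and "e \<subseteq> V" and "card e = 3"
    using three_graph_finite \<open>finite V\<close> \<open>e \<in> E\<close> unfolding three_graph_def by auto
  then obtain a b c where e: "e = {a, b, c}" and "a \<noteq> b" "a \<noteq> c" "b \<noteq> c"
    by (auto simp: card_Suc_eq numeral_3_eq_3)
  have "2 \<le> card (V - e)"
    using \<open>e \<subseteq> V\<close> \<open>card e = 3\<close> \<open>finite V\<close> \<open>5 \<le> card V\<close> by (simp add: card_Diff_subset finite_subset)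
  then obtain v where "v \<in> V - e" and T: "{a, b, v} \<notin> E"
    using exists_non_edge_through_pair[OF \<open>finite E\<close> \<open>e \<in> E\<close>] low e by blast
  let ?T = "{a, b, v}"
  let ?F = "insert ?T E"
  have "?T \<subseteq> V" and "card ?T = 3"
    using \<open>v \<in> V - e\<close> \<open>e \<subseteq> V\<close> e \<open>a \<noteq> b\<close> by auto
  then have "has_berge_K4 ?F"
    using sat T unfolding berge_K4_saturated_def by blast
  then obtain K f where berge: "is_berge_K4 ?F K f"
    unfolding has_berge_K4_iff by blast
  have "?T \<in> f ` pairs_of K"
  proof (rule ccontr)
    assume "?T \<notin> f ` pairs_of K"
    then have "f ` pairs_of K \<subseteq> E"
      using is_berge_K4_image_subset[OF berge] by blast
    then have "is_berge_K4 E K f"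
      by (rule is_berge_K4_restrict[OF berge])
    then show False
      using \<open>\<not> has_berge_K4 E\<close> has_berge_K4_iff by blast
  qed
  moreover have "?T \<notin> f ` pairs_of K"
  proof (rule new_edge_not_in_berge_K4[OF _ berge])
    have "hdeg ?F u \<le> 3" if "u \<in> e" for u
      using hdeg_insert_le[OF \<open>finite E\<close>, of ?T u] low[OF that] by simp
    then show "hdeg ?F a \<le> 3" "hdeg ?F b \<le> 3" using e by auto
    have "c \<notin> ?T" using \<open>v \<in> V - e\<close> e \<open>a \<noteq> c\<close> \<open>b \<noteq> c\<close> by auto
    then show "hdeg ?F c \<le> 2"
      using hdeg_insert_not_mem[of c ?T E] low e by simp
    show "?T \<noteq> {a, b, c}" using T \<open>e \<in> E\<close> e by auto
  qed (use \<open>finite E\<close> \<open>e \<in> E\<close> e \<open>a \<noteq> b\<close> in auto)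
  ultimately show False by contradiction
qed

theorem lemma3p4:
  fixes V :: "'a set" and E :: "'a set set" and n :: nat
  assumes "finite V" and "card V = n" and "n \<ge> 96"
    and "min_berge_K4_saturated V E"
  defines "X \<equiv> {v \<in> V. hdeg E v \<ge> 3}"
  defines "A \<equiv> {v \<in> V - X. \<forall>e\<in>E. v \<in> e \<longrightarrow> e \<inter> X \<noteq> {}}"
  defines "B \<equiv> V - (X \<union> A)"
  shows "B = {}"
proof (rule ccontr)
  assume "B \<noteq> {}"
  then obtain e where "e \<in> E" and "e \<inter> X = {}"
    unfolding B_def A_def by auto
  have sat: "berge_K4_saturated V E"
    using assms(4) unfolding min_berge_K4_saturated_def by simp
  then have "e \<subseteq> V"
    using \<open>e \<in> E\<close> unfolding berge_K4_saturated_def three_graph_def by auto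
  obtain u where "u \<in> e" and "3 \<le> hdeg E u"
    using berge_K4_saturated_edge_has_high_degree_vertex[OF sat \<open>finite V\<close> _ \<open>e \<in> E\<close>] assms(2,3)
    by auto
  then have "u \<in> e \<inter> X"
    using \<open>e \<subseteq> V\<close> unfolding X_def by auto
  then show False using \<open>e \<inter> X = {}\<close> by blast
qed

end
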